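(* Let $P,Q\subseteq\mathbb R^n$ be nonzero closed convex cones with $|\mathfrak s(P,Q)|\ne1$, and let $L$ be the smallest linear subspace of $\mathbb R^n$ containing both $P$ and $Q$. Let $\bar u$ be a solution of $\min_{u\in P\cap S_n}F_Q(u)$ such that $\mathtt{Proj}_{Q\cap S_n}(\bar u)$ is a singleton. Then $\bar u$ lies on the boundary of $P$ relative to $L$ (i.e., $\bar u$ is not an interior point of $P$ in the relative topology of $L$).
   Context: $S_n$ is the unit sphere of $\mathbb R^n$. $F_Q(u):=\max_{v\in Q\cap S_n}\langle u,v\rangle$, $\mathfrak s(P,Q):=\min_{u\in P\cap S_n}F_Q(u)$, and $\mathtt{Proj}_X(u):=\arg\min_{x\in X}\|x-u\|$. *)

theory Defs
  imports "HOL-Analysis.Analysis"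
begin

definition F_Q :: "'a::euclidean_space set \<Rightarrow> 'a \<Rightarrow> real" where
  "F_Q Q u = (SUP v \<in> Q \<inter> sphere 0 1. inner u v)"

definition s_PQ :: "'a::euclidean_space set \<Rightarrow> 'a set \<Rightarrow> real" where
  "s_PQ P Q = (INF u \<in> P \<inter> sphere 0 1. F_Q Q u)"

definition Proj :: "'a::euclidean_space set \<Rightarrow> 'a \<Rightarrow> 'a set" where
  "Proj X u = {x \<in> X. \<forall>y\<in>X. norm (x - u) \<le> norm (y - u)}"

end

theory Submission
  imports Defs
begin

text \<open>
  Let \<open>w\<close> be the point of \<open>Q \<inter> S\<^sub>n\<close> nearest to \<open>ubar\<close>; on the sphere it is the
  unique maximiser of \<open>\<langle>ubar, -\<rangle>\<close>, so \<open>s = \<langle>ubar, w\<rangle> = F\<^sub>Q ubar = s(P,Q)\<close>.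
  If \<open>ubar\<close> were relatively interior, \<open>ubar - t w\<close> would lie in \<open>P\<close> for small \<open>t > 0\<close>.
  Uniqueness of the maximiser gives \<open>F\<^sub>Q (ubar - t w) = s - t + o(t)\<close>, while
  \<open>\<parallel>ubar - t w\<parallel> = 1 - t s + o(t)\<close>; so at the normalised point \<open>F\<^sub>Q\<close> equals
  \<open>s - t (1 - s\<^sup>2) + o(t) < s\<close>, because \<open>\<bar>s\<bar> < 1\<close>. This contradicts minimality.
  The \<open>o(t)\<close> terms are handled along a sequence \<open>t\<^sub>n \<longlonglongrightarrow> 0\<close>, using compactness of
  \<open>Q \<inter> S\<^sub>n\<close> to make maximisers of the perturbed functionals converge to \<open>w\<close>.\<close>

lemma SUP_inner_attained:
  fixes K :: "'a::real_inner set"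
  assumes "compact K" "K \<noteq> {}"
  obtains v where "v \<in> K" "\<And>y. y \<in> K \<Longrightarrow> inner u y \<le> inner u v"
    "(SUP y\<in>K. inner u y) = inner u v"
proof -
  have "continuous_on K (inner u)" by (intro continuous_intros)
  then obtain v where v: "v \<in> K" "\<And>y. y \<in> K \<Longrightarrow> inner u y \<le> inner u v"
    using continuous_attains_sup[OF assms] by blast
  moreover have "(SUP y\<in>K. inner u y) = inner u v"
    using v by (intro cSup_eq_maximum) auto
  ultimately show thesis using that by blast
qed

lemma SUP_inner_scaleR:
  fixes K :: "'a::real_inner set"
  assumes "compact K" "K \<noteq> {}" "c \<ge> 0"
  shows "(SUP y\<in>K. inner (c *\<^sub>R u) y) = c * (SUP y\<in>K. inner u y)"
proof -
  obtain v where v: "v \<in> K" "\<And>y. y \<in> K \<Longrightarrow> inner u y \<le> inner u v"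
    and sup: "(SUP y\<in>K. inner u y) = inner u v"
    using SUP_inner_attained[OF assms(1,2)] by blast
  have "(SUP y\<in>K. inner (c *\<^sub>R u) y) = c * inner u v"
    using v assms(3) by (intro cSup_eq_maximum) (auto intro: mult_left_mono)
  with sup show ?thesis by simp
qed

lemma Proj_sphere_eq_max_inner:
  fixes X :: "'a::euclidean_space set"
  assumes "X \<subseteq> sphere 0 1"
  shows "Proj X u = {x \<in> X. \<forall>y\<in>X. inner u y \<le> inner u x}"
proof -
  have dist_sq: "inner (x - u) (x - u) = 1 - 2 * inner u x + inner u u" if "x \<in> X" for x
  proof -
    have "inner x x = 1" using assms that by (auto simp: norm_eq_1)
    then show ?thesis by (simp add: inner_diff_left inner_diff_right inner_commute)
  qed
  have "norm (x - u) \<le> norm (y - u) \<longleftrightarrow> inner u y \<le> inner u x" if "x \<in> X" "y \<in> X" for x y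
    unfolding norm_le dist_sq[OF that(1)] dist_sq[OF that(2)] by simp
  then show ?thesis unfolding Proj_def by blast
qed

lemma subseq_tendsto_unique_maximizer:
  fixes K :: "'a::real_inner set"
  assumes "compact K" "\<And>n. v n \<in> K"
    and "\<And>n. g n \<le> inner a (v n)" "g \<longlonglongrightarrow> M"
    and unique: "\<And>y. y \<in> K \<Longrightarrow> M \<le> inner a y \<Longrightarrow> y = w"
  obtains r where "strict_mono r" "(v \<circ> r) \<longlonglongrightarrow> w"
proof -
  obtain y r where y: "y \<in> K" "strict_mono r" "(v \<circ> r) \<longlonglongrightarrow> y"
    using seq_compactE[OF compact_imp_seq_compact[OF assms(1)]] assms(2) by metis
  have "M \<le> inner a y"
  proof (rule LIMSEQ_le)
    show "(g \<circ> r) \<longlonglongrightarrow> M" using LIMSEQ_subseq_LIMSEQ[OF assms(4) y(2)] .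
    show "(\<lambda>n. inner a ((v \<circ> r) n)) \<longlonglongrightarrow> inner a y" by (intro tendsto_intros y(3))
    show "\<exists>N. \<forall>n\<ge>N. (g \<circ> r) n \<le> inner a ((v \<circ> r) n)" using assms(3) by auto
  qed
  with unique y show thesis using that by blast
qed

lemma perturbed_maximizer_bounds:
  fixes a w v :: "'a::real_inner"
  assumes "norm a = 1" "norm w = 1" "norm v = 1" "0 < t"
    and "inner a v \<le> inner a w"
    and "inner a w * norm (a - t *\<^sub>R w) \<le> inner (a - t *\<^sub>R w) v"
  shows "inner a w * norm (a - t *\<^sub>R w) - t \<le> inner a v"
    and "inner w v \<le> inner a w * (2 * inner a w - t) / (1 + norm (a - t *\<^sub>R w))"
proof -
  define s n where "s = inner a w" and "n = norm (a - t *\<^sub>R w)"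
  have hyp: "s * n \<le> inner a v - t * inner w v"
    using assms(6) by (simp add: s_def n_def inner_diff_left)
  have "\<bar>inner w v\<bar> \<le> 1"
    using Cauchy_Schwarz_ineq2[of w v] assms(2,3) by simp
  then have "- t \<le> t * inner w v"
    using assms(4) mult_left_mono[of "-1" "inner w v" t] by simp
  with hyp show "inner a w * norm (a - t *\<^sub>R w) - t \<le> inner a v"
    by (simp add: s_def n_def)
  have "inner a a = 1" "inner w w = 1" using assms(1,2) by (simp_all add: norm_eq_1)
  have "n\<^sup>2 = inner (a - t *\<^sub>R w) (a - t *\<^sub>R w)"
    by (simp add: n_def power2_norm_eq_inner)
  also have "\<dots> = 1 - 2 * t * s + t\<^sup>2"
    using \<open>inner a a = 1\<close> \<open>inner w w = 1\<close>
    by (simp add: s_def inner_diff_left inner_diff_right inner_commute algebra_simps power2_eq_square)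
  finally have n_sq: "n\<^sup>2 = 1 - 2 * t * s + t\<^sup>2" .
  have n_pos: "0 < 1 + n" by (simp add: n_def add_pos_nonneg)
  have "t * inner w v \<le> s * (1 - n)"
    using hyp assms(5) by (simp add: s_def algebra_simps)
  then have "t * inner w v * (1 + n) \<le> s * (1 - n) * (1 + n)"
    using n_pos by (simp add: mult_right_mono)
  also have "\<dots> = s * (1 - n\<^sup>2)"
    by (simp add: algebra_simps power2_eq_square)
  also have "\<dots> = t * (s * (2 * s - t))"
    unfolding n_sq by (simp add: algebra_simps power2_eq_square)
  finally have "inner w v * (1 + n) \<le> s * (2 * s - t)"
    using assms(4) by (simp add: mult.assoc)
  with n_pos show "inner w v \<le> inner a w * (2 * inner a w - t) / (1 + norm (a - t *\<^sub>R w))"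
    by (simp add: s_def n_def pos_le_divide_eq)
qed

lemma support_descent_along_unique_maximizer:
  fixes K :: "'a::real_inner set"
  assumes "compact K" "K \<subseteq> sphere 0 1" "norm a = 1" "w \<in> K"
    and max: "\<And>y. y \<in> K \<Longrightarrow> inner a y \<le> inner a w"
    and unique: "\<And>y. y \<in> K \<Longrightarrow> inner a w \<le> inner a y \<Longrightarrow> y = w"
    and "\<bar>inner a w\<bar> \<noteq> 1" "0 < e"
  shows "\<exists>t. 0 < t \<and> t < e \<and>
           (SUP v\<in>K. inner (a - t *\<^sub>R w) v) < inner a w * norm (a - t *\<^sub>R w)"
proof (rule ccontr)
  define s where "s = inner a w"
  assume "\<not> ?thesis"
  then have no_descent: "s * norm (a - t *\<^sub>R w) \<le> (SUP v\<in>K. inner (a - t *\<^sub>R w) v)"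
    if "0 < t" "t < e" for t
    using that unfolding s_def by (meson not_le)
  define t where "t n = e / 2 * inverse (Suc n)" for n
  have t_pos: "0 < t n" for n
    using \<open>0 < e\<close> by (simp add: t_def)
  have t_lt: "t n < e" for n
    using \<open>0 < e\<close> by (simp add: t_def field_simps add_pos_nonneg)
  have t_lim: "t \<longlonglongrightarrow> 0"
    unfolding t_def using tendsto_mult_right_zero[OF LIMSEQ_inverse_real_of_nat] by simp
  define u where "u n = a - t n *\<^sub>R w" for n
  have norm_w: "norm w = 1" using assms(2,4) by auto
  have "\<forall>n. \<exists>v\<in>K. (SUP y\<in>K. inner (u n) y) = inner (u n) v"
    using SUP_inner_attained[OF assms(1)] assms(4) by (metis empty_iff)
  then obtain v where v: "\<And>n. v n \<in> K" "\<And>n. (SUP y\<in>K. inner (u n) y) = inner (u n) (v n)"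
    by metis
  have bounds: "s * norm (u n) - t n \<le> inner a (v n)"
    "inner w (v n) \<le> s * (2 * s - t n) / (1 + norm (u n))" for n
  proof -
    have "norm (v n) = 1" using v(1)[of n] assms(2) by auto
    moreover have "s * norm (u n) \<le> inner (u n) (v n)"
      using no_descent[OF t_pos t_lt, of n] v(2)[of n] by (simp add: u_def)
    ultimately show "s * norm (u n) - t n \<le> inner a (v n)"
      "inner w (v n) \<le> s * (2 * s - t n) / (1 + norm (u n))"
      using perturbed_maximizer_bounds[OF assms(3) norm_w _ t_pos[of n] max[OF v(1)[of n]]]
      unfolding s_def u_def by auto
  qed
  have norm_u_lim: "(\<lambda>n. norm (u n)) \<longlonglongrightarrow> 1"
    using tendsto_norm[OF tendsto_diff[OF tendsto_const tendsto_scaleR[OF t_lim tendsto_const]],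
        of a w] assms(3) by (simp add: u_def)
  have lower_lim: "(\<lambda>n. s * norm (u n) - t n) \<longlonglongrightarrow> s"
    using tendsto_diff[OF tendsto_mult_left[OF norm_u_lim] t_lim, of s] by simp
  obtain r where r: "strict_mono r" "(v \<circ> r) \<longlonglongrightarrow> w"
    using subseq_tendsto_unique_maximizer[where g = "\<lambda>n. s * norm (u n) - t n",
        OF assms(1) v(1) bounds(1) lower_lim unique[folded s_def]] .
  have "inner w w \<le> s * (2 * s - 0) / (1 + 1)"
  proof (rule LIMSEQ_le)
    show "(\<lambda>n. inner w ((v \<circ> r) n)) \<longlonglongrightarrow> inner w w"
      by (intro tendsto_intros r(2))
    show "(\<lambda>n. s * (2 * s - t (r n)) / (1 + norm (u (r n)))) \<longlonglongrightarrow> s * (2 * s - 0) / (1 + 1)"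
      using LIMSEQ_subseq_LIMSEQ[OF t_lim r(1)] LIMSEQ_subseq_LIMSEQ[OF norm_u_lim r(1)]
      by (intro tendsto_intros) (auto simp: o_def)
    show "\<exists>N. \<forall>n\<ge>N. inner w ((v \<circ> r) n) \<le> s * (2 * s - t (r n)) / (1 + norm (u (r n)))"
      using bounds(2) by auto
  qed
  then have "1 \<le> s\<^sup>2"
    using norm_w by (simp add: norm_eq_1 power2_eq_square)
  moreover have "\<bar>s\<bar> < 1"
    using Cauchy_Schwarz_ineq2[of a w] assms(3,7) norm_w by (simp add: s_def)
  ultimately show False
    by (simp add: abs_square_less_1[symmetric])
qed

lemma F_Q_cone_minimum_scaled:
  fixes P Q :: "'a::euclidean_space set"
  assumes "cone P" "closed Q" "Q \<inter> sphere 0 1 \<noteq> {}"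
    and min: "\<forall>u \<in> P \<inter> sphere 0 1. F_Q Q ubar \<le> F_Q Q u"
    and "x \<in> P"
  shows "F_Q Q ubar * norm x \<le> F_Q Q x"
proof (cases "x = 0")
  case True
  with assms(3) show ?thesis by (simp add: F_Q_def)
next
  case False
  have compact: "compact (Q \<inter> sphere 0 1)"
    using assms(2) by (simp add: compact_Int_closed compact_sphere closed_Int_compact)
  have "(1 / norm x) *\<^sub>R x \<in> P \<inter> sphere 0 1"
    using assms(1,5) False by (auto simp: cone_def)
  with min have "F_Q Q ubar \<le> F_Q Q ((1 / norm x) *\<^sub>R x)" by blast
  also have "\<dots> = F_Q Q x / norm x"
    unfolding F_Q_def using compact assms(3) by (subst SUP_inner_scaleR) auto
  finally show ?thesis
    using False by (simp add: le_divide_eq)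
qed

theorem mainTheorem8:
  fixes P Q :: "'a::euclidean_space set" and ubar :: 'a
  assumes "closed P" "convex P" "cone P" "\<exists>x\<in>P. x \<noteq> 0"
      and "closed Q" "convex Q" "cone Q" "\<exists>x\<in>Q. x \<noteq> 0"
      and "\<bar>s_PQ P Q\<bar> \<noteq> 1"
      and "ubar \<in> P \<inter> sphere 0 1"
      and "\<forall>u \<in> P \<inter> sphere 0 1. F_Q Q ubar \<le> F_Q Q u"
      and "\<exists>w. Proj (Q \<inter> sphere 0 1) ubar = {w}"
  shows "ubar \<notin> (top_of_set (span (P \<union> Q))) interior_of P"
proof
  assume "ubar \<in> (top_of_set (span (P \<union> Q))) interior_of P"
  then obtain e where "0 < e" and ball_in_P: "ball ubar e \<inter> span (P \<union> Q) \<subseteq> P"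
    by (meson openin_contains_ball openin_interior_of interior_of_subset subset_trans)
  define K where "K = Q \<inter> sphere 0 1"
  have K: "compact K" "K \<subseteq> sphere 0 1"
    using assms(5) by (auto simp: K_def compact_Int_closed compact_sphere closed_Int_compact)
  have F_Q_K: "F_Q Q x = (SUP v\<in>K. inner x v)" for x
    by (simp add: F_Q_def K_def)
  obtain w where "Proj K ubar = {w}"
    using assms(12) by (auto simp: K_def)
  then have w: "w \<in> K" and max: "\<And>y. y \<in> K \<Longrightarrow> inner ubar y \<le> inner ubar w"
    and unique: "\<And>y. y \<in> K \<Longrightarrow> inner ubar w \<le> inner ubar y \<Longrightarrow> y = w"
    unfolding Proj_sphere_eq_max_inner[OF K(2)] by (auto dest: order_trans)
  have "F_Q Q ubar = inner ubar w"
    unfolding F_Q_K using w max by (intro cSup_eq_maximum) auto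
  moreover have "s_PQ P Q = F_Q Q ubar"
    unfolding s_PQ_def using assms(10,11) by (intro cInf_eq_minimum) auto
  ultimately obtain t where "0 < t" "t < e"
    and descent: "F_Q Q (ubar - t *\<^sub>R w) < F_Q Q ubar * norm (ubar - t *\<^sub>R w)"
    using support_descent_along_unique_maximizer[OF K _ w max unique _ \<open>0 < e\<close>] assms(9,10)
    unfolding F_Q_K by auto
  have "ubar - t *\<^sub>R w \<in> span (P \<union> Q)"
    using assms(10) w by (intro span_diff span_scale span_base) (auto simp: K_def)
  moreover have "ubar - t *\<^sub>R w \<in> ball ubar e"
    using \<open>0 < t\<close> \<open>t < e\<close> w K(2) by (auto simp: dist_norm)
  ultimately have "ubar - t *\<^sub>R w \<in> P" using ball_in_P by blast
  with F_Q_cone_minimum_scaled[OF assms(3,5) _ assms(11)] descent w show False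
    by (fastforce simp: K_def)
qed

end
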